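(* Let $S$ be an abundant semigroup with a quasi-ideal adequate transversal $S^0$, let $R=\{x\in S:e_x=e_{\bar x}\}$, $L=\{x\in S:f_x=f_{\bar x}\}$ and let $T=\{(x,a)\in L\times R:\bar x=\bar a\}$ with multiplication $(x,a)(y,b)=(e_xay,\,ayf_b)$ (products in $S$). Then $$E(T)=\{(e_y\bar y,\ \bar yf_y): y\in E(S)\}.$$ Moreover, if $(x,a)\in E(T)$ then $x$ and $a$ are regular elements of $S$.
   Context: $E(\cdot)$ denotes the set of idempotents. For a semigroup $S$, $\mathcal{R}^\ast=\{(a,b): \text{for all } x,y\in S^1,\ xa=ya \iff xb=yb\}$ and $\mathcal{L}^\ast$ dually. $S$ is abundant if every $\mathcal{R}^\ast$-class and $\mathcal{L}^\ast$-class contains an idempotent; adequate if abundant with commuting idempotents. In an adequate semigroup $a^+,a^\ast$ are the unique idempotents $\mathcal{R}^\ast$-, resp. $\mathcal{L}^\ast$-related to $a$. A subsemigroup $U$ of abundant $S$ is a $\ast$-subsemigroup if $U$ is abundant and $\mathcal{L}^\ast_U=\mathcal{L}^\ast_S\cap(U\times U)$, $\mathcal{R}^\ast_U=\mathcal{R}^\ast_S\cap(U\times U)$. An adequate $\ast$-subsemigroup $S^0$ of abundant $S$ is an adequate transversal if for each $x\in S$ there is a unique $\bar x\in S^0$ and idempotents $e,f$ of $S$ with $x=e\bar xf$, $e\,\mathcal{L}\,\bar x^+$, $f\,\mathcal{R}\,\bar x^\ast$; these $e,f$ are unique and denoted $e_x,f_x$. It is a quasi-ideal adequate transversal if moreover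 $S^0SS^0\subseteq S^0$. *)

theory Defs
  imports Main
begin

text \<open>The semigroup S is the whole carrier of a type of class semigroup_mult.
  Subsemigroups are given as subsets U. Elements of S^1 are modelled as
  'a option, None standing for the adjoined identity.\<close>

definition idems :: "'a::semigroup_mult set \<Rightarrow> 'a set" where
  "idems U = {e \<in> U. e * e = e}"

fun lmul1 :: "'a::semigroup_mult option \<Rightarrow> 'a \<Rightarrow> 'a" where
  "lmul1 None a = a"
| "lmul1 (Some x) a = x * a"

fun rmul1 :: "'a::semigroup_mult \<Rightarrow> 'a option \<Rightarrow> 'a" where
  "rmul1 a None = a"
| "rmul1 a (Some x) = a * x"

definition Rstar :: "'a::semigroup_mult set \<Rightarrow> 'a \<Rightarrow> 'a \<Rightarrow> bool" where
  "Rstar U a b \<longleftrightarrow> (\<forall>x \<in> insert None (Some ` U). \<forall>y \<in> insert None (Some ` U).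
      (lmul1 x a = lmul1 y a \<longleftrightarrow> lmul1 x b = lmul1 y b))"

definition Lstar :: "'a::semigroup_mult set \<Rightarrow> 'a \<Rightarrow> 'a \<Rightarrow> bool" where
  "Lstar U a b \<longleftrightarrow> (\<forall>x \<in> insert None (Some ` U). \<forall>y \<in> insert None (Some ` U).
      (rmul1 a x = rmul1 a y \<longleftrightarrow> rmul1 b x = rmul1 b y))"

definition GreenL :: "'a::semigroup_mult \<Rightarrow> 'a \<Rightarrow> bool" where
  "GreenL a b \<longleftrightarrow> (a = b \<or> (\<exists>s. a = s * b)) \<and> (b = a \<or> (\<exists>s. b = s * a))"

definition GreenR :: "'a::semigroup_mult \<Rightarrow> 'a \<Rightarrow> bool" where
  "GreenR a b \<longleftrightarrow> (a = b \<or> (\<exists>s. a = b * s)) \<and> (b = a \<or> (\<exists>s. b = a * s))"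

definition subsemigroup :: "'a::semigroup_mult set \<Rightarrow> bool" where
  "subsemigroup U \<longleftrightarrow> (\<forall>a\<in>U. \<forall>b\<in>U. a * b \<in> U)"

definition abundant :: "'a::semigroup_mult set \<Rightarrow> bool" where
  "abundant U \<longleftrightarrow> subsemigroup U \<and>
     (\<forall>a\<in>U. (\<exists>e\<in>idems U. Rstar U a e) \<and> (\<exists>f\<in>idems U. Lstar U a f))"

definition adequate :: "'a::semigroup_mult set \<Rightarrow> bool" where
  "adequate U \<longleftrightarrow> abundant U \<and> (\<forall>e\<in>idems U. \<forall>f\<in>idems U. e * f = f * e)"

definition star_subsemigroup :: "'a::semigroup_mult set \<Rightarrow> bool" where
  "star_subsemigroup U \<longleftrightarrow> subsemigroup U \<and> abundant U \<and>
     (\<forall>a\<in>U. \<forall>b\<in>U. Lstar U a b \<longleftrightarrow> Lstar UNIV a b) \<and>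
     (\<forall>a\<in>U. \<forall>b\<in>U. Rstar U a b \<longleftrightarrow> Rstar UNIV a b)"

definition plus_of :: "'a::semigroup_mult set \<Rightarrow> 'a \<Rightarrow> 'a" where
  "plus_of U a = (THE e. e \<in> idems U \<and> Rstar U a e)"

definition ast_of :: "'a::semigroup_mult set \<Rightarrow> 'a \<Rightarrow> 'a" where
  "ast_of U a = (THE e. e \<in> idems U \<and> Lstar U a e)"

definition decomp :: "'a::semigroup_mult set \<Rightarrow> 'a \<Rightarrow> 'a \<Rightarrow> 'a \<Rightarrow> 'a \<Rightarrow> bool" where
  "decomp S0 x xb e f \<longleftrightarrow> xb \<in> S0 \<and> e \<in> idems UNIV \<and> f \<in> idems UNIV \<and>
     x = e * xb * f \<and> GreenL e (plus_of S0 xb) \<and> GreenR f (ast_of S0 xb)"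

definition adequate_transversal :: "'a::semigroup_mult set \<Rightarrow> bool" where
  "adequate_transversal S0 \<longleftrightarrow> adequate S0 \<and> star_subsemigroup S0 \<and>
     (\<forall>x. \<exists>!xb. \<exists>e f. decomp S0 x xb e f)"

definition quasi_ideal_adequate_transversal :: "'a::semigroup_mult set \<Rightarrow> bool" where
  "quasi_ideal_adequate_transversal S0 \<longleftrightarrow> adequate_transversal S0 \<and>
     (\<forall>a\<in>S0. \<forall>s. \<forall>b\<in>S0. a * s * b \<in> S0)"

definition bar :: "'a::semigroup_mult set \<Rightarrow> 'a \<Rightarrow> 'a" where
  "bar S0 x = (THE xb. \<exists>e f. decomp S0 x xb e f)"

definition e_of :: "'a::semigroup_mult set \<Rightarrow> 'a \<Rightarrow> 'a" where
  "e_of S0 x = (THE e. \<exists>f. decomp S0 x (bar S0 x) e f)"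

definition f_of :: "'a::semigroup_mult set \<Rightarrow> 'a \<Rightarrow> 'a" where
  "f_of S0 x = (THE f. \<exists>e. decomp S0 x (bar S0 x) e f)"

definition regular :: "'a::semigroup_mult \<Rightarrow> bool" where
  "regular x \<longleftrightarrow> (\<exists>y. x * y * x = x)"

definition Rset :: "'a::semigroup_mult set \<Rightarrow> 'a set" where
  "Rset S0 = {x. e_of S0 x = e_of S0 (bar S0 x)}"

definition Lset :: "'a::semigroup_mult set \<Rightarrow> 'a set" where
  "Lset S0 = {x. f_of S0 x = f_of S0 (bar S0 x)}"

definition Tset :: "'a::semigroup_mult set \<Rightarrow> ('a \<times> 'a) set" where
  "Tset S0 = {(x, a). x \<in> Lset S0 \<and> a \<in> Rset S0 \<and> bar S0 x = bar S0 a}"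

definition Tmul :: "'a::semigroup_mult set \<Rightarrow> 'a \<times> 'a \<Rightarrow> 'a \<times> 'a \<Rightarrow> 'a \<times> 'a" where
  "Tmul S0 p q = (case p of (x, a) \<Rightarrow> case q of (y, b) \<Rightarrow>
      (e_of S0 x * a * y, a * y * f_of S0 b))"

definition ET :: "'a::semigroup_mult set \<Rightarrow> ('a \<times> 'a) set" where
  "ET S0 = {p \<in> Tset S0. Tmul S0 p p = p}"

end

theory Submission
  imports Defs
begin

text \<open>Write \<open>y = e u f\<close> for the decomposition of an element through the transversal, so
  \<open>u\<^sup>+ e = u\<^sup>+\<close> and \<open>f u\<^sup>* = u\<^sup>*\<close>. Multiplying \<open>y y = y\<close> by \<open>u\<^sup>*\<close> on the right and by \<open>u\<^sup>+\<close> on the left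
  shows that \<open>y\<close> is idempotent exactly when \<open>(e u) f (e u) = e u\<close> and \<open>(u f) e (u f) = u f\<close>.
  These two equations say precisely that \<open>(e u, u f)\<close> is idempotent in \<open>T\<close>, and they show
  that \<open>e u\<close> and \<open>u f\<close> are regular. Every element of \<open>T\<close> has the form \<open>(e u, u f)\<close>, since
  membership in \<open>L\<close> and \<open>R\<close> forces the outer idempotents to be \<open>u\<^sup>*\<close> and \<open>u\<^sup>+\<close>, which \<open>u\<close> absorbs.\<close>

lemma Rstar_sym: "Rstar U a b \<Longrightarrow> Rstar U b a"
  unfolding Rstar_def by blast

lemma Lstar_sym: "Lstar U a b \<Longrightarrow> Lstar U b a"
  unfolding Lstar_def by blast

lemma Rstar_left_unit:
  assumes "Rstar U a b" "e \<in> U" "e * a = a"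
  shows "e * b = b"
proof -
  have "lmul1 (Some e) a = lmul1 None a" using assms(3) by simp
  then have "lmul1 (Some e) b = lmul1 None b" using assms(1,2) unfolding Rstar_def by blast
  then show ?thesis by simp
qed

lemma Lstar_right_unit:
  assumes "Lstar U a b" "e \<in> U" "a * e = a"
  shows "b * e = b"
proof -
  have "rmul1 a (Some e) = rmul1 a None" using assms(3) by simp
  then have "rmul1 b (Some e) = rmul1 b None" using assms(1,2) unfolding Lstar_def by blast
  then show ?thesis by simp
qed

lemma adequate_plus_of:
  assumes "adequate U" "u \<in> U"
  shows "plus_of U u \<in> idems U \<and> Rstar U u (plus_of U u)"
proof -
  obtain e where e: "e \<in> idems U" "Rstar U u e"
    using assms unfolding adequate_def abundant_def by blast
  have "e' = e" if e': "e' \<in> idems U" "Rstar U u e'" for e'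
  proof -
    have "e' * u = u" using Rstar_left_unit[OF Rstar_sym[OF e'(2)]] e'(1) by (auto simp: idems_def)
    then have "e' * e = e" using Rstar_left_unit[OF e(2)] e'(1) by (auto simp: idems_def)
    moreover have "e * u = u" using Rstar_left_unit[OF Rstar_sym[OF e(2)]] e(1) by (auto simp: idems_def)
    then have "e * e' = e'" using Rstar_left_unit[OF e'(2)] e(1) by (auto simp: idems_def)
    moreover have "e * e' = e' * e" using assms(1) e(1) e'(1) unfolding adequate_def by blast
    ultimately show ?thesis by simp
  qed
  then have "plus_of U u = e" unfolding plus_of_def using e by blast
  then show ?thesis using e by simp
qed

lemma adequate_ast_of:
  assumes "adequate U" "u \<in> U"
  shows "ast_of U u \<in> idems U \<and> Lstar U u (ast_of U u)"
proof -
  obtain e where e: "e \<in> idems U" "Lstar U u e"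
    using assms unfolding adequate_def abundant_def by blast
  have "e' = e" if e': "e' \<in> idems U" "Lstar U u e'" for e'
  proof -
    have "u * e' = u" using Lstar_right_unit[OF Lstar_sym[OF e'(2)]] e'(1) by (auto simp: idems_def)
    then have "e * e' = e" using Lstar_right_unit[OF e(2)] e'(1) by (auto simp: idems_def)
    moreover have "u * e = u" using Lstar_right_unit[OF Lstar_sym[OF e(2)]] e(1) by (auto simp: idems_def)
    then have "e' * e = e'" using Lstar_right_unit[OF e'(2)] e(1) by (auto simp: idems_def)
    moreover have "e * e' = e' * e" using assms(1) e(1) e'(1) unfolding adequate_def by blast
    ultimately show ?thesis by simp
  qed
  then have "ast_of U u = e" unfolding ast_of_def using e by blast
  then show ?thesis using e by simp
qed

lemma adequate_transversal_plus_of: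
  assumes "adequate_transversal S0" "u \<in> S0"
  shows "plus_of S0 u \<in> S0" "plus_of S0 u * plus_of S0 u = plus_of S0 u"
    "plus_of S0 u * u = u" "Rstar UNIV u (plus_of S0 u)"
proof -
  have S0: "adequate S0" "star_subsemigroup S0"
    using assms(1) unfolding adequate_transversal_def by auto
  note p = adequate_plus_of[OF S0(1) assms(2)]
  show in_S0: "plus_of S0 u \<in> S0" and idem: "plus_of S0 u * plus_of S0 u = plus_of S0 u"
    using p by (auto simp: idems_def)
  show "plus_of S0 u * u = u" using Rstar_left_unit[OF Rstar_sym[OF conjunct2[OF p]] in_S0 idem] .
  show "Rstar UNIV u (plus_of S0 u)"
    using p S0(2) assms(2) in_S0 unfolding star_subsemigroup_def by blast
qed

lemma adequate_transversal_ast_of: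
  assumes "adequate_transversal S0" "u \<in> S0"
  shows "ast_of S0 u \<in> S0" "ast_of S0 u * ast_of S0 u = ast_of S0 u"
    "u * ast_of S0 u = u" "Lstar UNIV u (ast_of S0 u)"
proof -
  have S0: "adequate S0" "star_subsemigroup S0"
    using assms(1) unfolding adequate_transversal_def by auto
  note p = adequate_ast_of[OF S0(1) assms(2)]
  show in_S0: "ast_of S0 u \<in> S0" and idem: "ast_of S0 u * ast_of S0 u = ast_of S0 u"
    using p by (auto simp: idems_def)
  show "u * ast_of S0 u = u" using Lstar_right_unit[OF Lstar_sym[OF conjunct2[OF p]] in_S0 idem] .
  show "Lstar UNIV u (ast_of S0 u)"
    using p S0(2) assms(2) in_S0 unfolding star_subsemigroup_def by blast
qed

lemma GreenL_idempotents:
  assumes "GreenL e p" "e * e = e" "p * p = p"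
  shows "e * p = e" "p * e = p"
proof -
  have "e = p \<or> (\<exists>s. e = s * p)" and "p = e \<or> (\<exists>s. p = s * e)"
    using assms(1) unfolding GreenL_def by auto
  from this(1) show "e * p = e" using assms(3) by (elim disjE exE) (simp_all add: mult.assoc)
  from \<open>p = e \<or> (\<exists>s. p = s * e)\<close> show "p * e = p"
    using assms(2) by (elim disjE exE) (simp_all add: mult.assoc)
qed

lemma GreenR_idempotents:
  assumes "GreenR f q" "f * f = f" "q * q = q"
  shows "q * f = f" "f * q = q"
proof -
  have "f = q \<or> (\<exists>s. f = q * s)" and "q = f \<or> (\<exists>s. q = f * s)"
    using assms(1) unfolding GreenR_def by auto
  from this(1) show "q * f = f" using assms(3) by (elim disjE exE) (simp_all add: mult.assoc[symmetric])
  from \<open>q = f \<or> (\<exists>s. q = f * s)\<close> show "f * q = q"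
    using assms(2) by (elim disjE exE) (simp_all add: mult.assoc[symmetric])
qed

lemma decomp_idempotent_units:
  assumes "adequate_transversal S0" "decomp S0 y u e f"
  shows "e * plus_of S0 u = e" "plus_of S0 u * e = plus_of S0 u"
    "ast_of S0 u * f = f" "f * ast_of S0 u = ast_of S0 u"
proof -
  have u: "u \<in> S0" and idem: "e * e = e" "f * f = f"
    and green: "GreenL e (plus_of S0 u)" "GreenR f (ast_of S0 u)"
    using assms(2) by (auto simp: decomp_def idems_def)
  show "e * plus_of S0 u = e" "plus_of S0 u * e = plus_of S0 u"
    using GreenL_idempotents[OF green(1) idem(1) adequate_transversal_plus_of(2)[OF assms(1) u]] .
  show "ast_of S0 u * f = f" "f * ast_of S0 u = ast_of S0 u"
    using GreenR_idempotents[OF green(2) idem(2) adequate_transversal_ast_of(2)[OF assms(1) u]] .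
qed

text \<open>Left multiplication by \<open>u\<^sup>+\<close> strips \<open>e\<close> off \<open>x = e u f\<close>, leaving \<open>u f\<close>; since \<open>u\<close> is
  \<open>L\<^sup>*\<close>-related to \<open>u\<^sup>*\<close> this determines \<open>u\<^sup>* f = f\<close>.\<close>
lemma decomp_unique_idempotents:
  assumes T: "adequate_transversal S0"
    and d: "decomp S0 x u e f" and d': "decomp S0 x u e' f'"
  shows "e = e'" "f = f'"
proof -
  have u: "u \<in> S0" and x: "x = e * u * f" "x = e' * u * f'"
    using d d' by (auto simp: decomp_def)
  let ?p = "plus_of S0 u" and ?q = "ast_of S0 u"
  note p = adequate_transversal_plus_of[OF T u] and q = adequate_transversal_ast_of[OF T u]
  note U = decomp_idempotent_units[OF T d] and U' = decomp_idempotent_units[OF T d']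
  have "?p * x = u * f" using x(1) U(2) p(3) by (simp add: mult.assoc[symmetric])
  moreover have "?p * x = u * f'" using x(2) U'(2) p(3) by (simp add: mult.assoc[symmetric])
  ultimately have "rmul1 u (Some f) = rmul1 u (Some f')" by simp
  then have "rmul1 ?q (Some f) = rmul1 ?q (Some f')" using q(4) unfolding Lstar_def by blast
  then show "f = f'" using U(3) U'(3) by simp
  have "x * ?q = e * u" using x(1) U(4) q(3) by (simp add: mult.assoc)
  moreover have "x * ?q = e' * u" using x(2) U'(4) q(3) by (simp add: mult.assoc)
  ultimately have "lmul1 (Some e) u = lmul1 (Some e') u" by simp
  then have "lmul1 (Some e) ?p = lmul1 (Some e') ?p" using p(4) unfolding Rstar_def by blast
  then show "e = e'" using U(1) U'(1) by simp
qed

lemma decomp_determines: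
  assumes T: "adequate_transversal S0" and d: "decomp S0 x u e f"
  shows "bar S0 x = u" "e_of S0 x = e" "f_of S0 x = f"
proof -
  have "\<exists>!xb. \<exists>e f. decomp S0 x xb e f" using T unfolding adequate_transversal_def by simp
  then show bar: "bar S0 x = u" unfolding bar_def using d by (blast intro: the1_equality)
  show "e_of S0 x = e" unfolding e_of_def bar
    using d decomp_unique_idempotents(1)[OF T d] by blast
  show "f_of S0 x = f" unfolding f_of_def bar
    using d decomp_unique_idempotents(2)[OF T d] by blast
qed

lemma decomp_of_bar:
  assumes T: "adequate_transversal S0"
  shows "decomp S0 x (bar S0 x) (e_of S0 x) (f_of S0 x)"
proof -
  obtain u e f where d: "decomp S0 x u e f"
    using T unfolding adequate_transversal_def by blast
  then show ?thesis using decomp_determines[OF T d] by simp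
qed

lemma decomp_transversal_element:
  assumes T: "adequate_transversal S0" and u: "u \<in> S0"
  shows "decomp S0 u u (plus_of S0 u) (ast_of S0 u)"
  using adequate_transversal_plus_of[OF T u] adequate_transversal_ast_of[OF T u] u
  unfolding decomp_def idems_def GreenL_def GreenR_def by (simp add: mult.assoc)

lemma transversal_element_determines:
  assumes T: "adequate_transversal S0" and u: "u \<in> S0"
  shows "bar S0 u = u" "e_of S0 u = plus_of S0 u" "f_of S0 u = ast_of S0 u"
  using decomp_determines[OF T decomp_transversal_element[OF T u]] by auto

lemma decomp_left_factor:
  assumes T: "adequate_transversal S0" and d: "decomp S0 y u e f"
  shows "decomp S0 (e * u) u e (ast_of S0 u)"
  using d adequate_transversal_ast_of[OF T, of u]
  unfolding decomp_def idems_def GreenR_def by (simp add: mult.assoc)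

lemma decomp_right_factor:
  assumes T: "adequate_transversal S0" and d: "decomp S0 y u e f"
  shows "decomp S0 (u * f) u (plus_of S0 u) f"
  using d adequate_transversal_plus_of[OF T, of u]
  unfolding decomp_def idems_def GreenL_def by (simp add: mult.assoc)

text \<open>Here \<open>p\<close> and \<open>q\<close> play the roles of \<open>u\<^sup>+\<close> and \<open>u\<^sup>*\<close>.\<close>
lemma idempotent_sandwich_iff:
  fixes e u f p q :: "'a::semigroup_mult"
  assumes "p * e = p" "p * u = u" "f * q = q" "u * q = u"
  shows "(e * u * f) * (e * u * f) = e * u * f \<longleftrightarrow>
    e * u * f * (e * u) = e * u \<and> u * f * e * (u * f) = u * f"
proof
  assume idem: "(e * u * f) * (e * u * f) = e * u * f"
  have "e * u * f * (e * u) = (e * u * f) * (e * u * f) * q"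
    using assms(3,4) by (simp add: mult.assoc)
  also have "\<dots> = e * u" using idem assms(3,4) by (simp add: mult.assoc)
  finally have left: "e * u * f * (e * u) = e * u" .
  have "u * f * e * (u * f) = p * ((e * u * f) * (e * u * f))"
    using assms(1,2) by (simp add: mult.assoc[symmetric])
  also have "\<dots> = u * f" using idem assms(1,2) by (simp add: mult.assoc[symmetric])
  finally show "e * u * f * (e * u) = e * u \<and> u * f * e * (u * f) = u * f"
    using left by blast
next
  assume "e * u * f * (e * u) = e * u \<and> u * f * e * (u * f) = u * f"
  then have "(e * u * f * (e * u)) * f = e * u * f" by simp
  then show "(e * u * f) * (e * u * f) = e * u * f" by (simp add: mult.assoc)
qed

lemma Tset_pair_of_decomp:
  assumes T: "adequate_transversal S0" and d: "decomp S0 y u e f"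
  shows "(e * u, u * f) \<in> Tset S0" "e_of S0 (e * u) = e" "f_of S0 (u * f) = f"
proof -
  have u: "u \<in> S0" using d by (simp add: decomp_def)
  note l = decomp_determines[OF T decomp_left_factor[OF T d]]
    and r = decomp_determines[OF T decomp_right_factor[OF T d]]
  show "(e * u, u * f) \<in> Tset S0"
    using l r transversal_element_determines[OF T u] by (simp add: Tset_def Lset_def Rset_def)
  show "e_of S0 (e * u) = e" "f_of S0 (u * f) = f" using l(2) r(3) .
qed

lemma Tset_pair_decomp:
  assumes T: "adequate_transversal S0" and xa: "(x, a) \<in> Tset S0"
  obtains y u e f where "decomp S0 y u e f" "x = e * u" "a = u * f"
proof -
  let ?u = "bar S0 x" and ?e = "e_of S0 x" and ?f = "f_of S0 a"
  have u: "?u \<in> S0" using decomp_of_bar[OF T] by (simp add: decomp_def)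
  note s = transversal_element_determines[OF T u]
  have dx: "decomp S0 x ?u ?e (ast_of S0 ?u)" and da: "decomp S0 a ?u (plus_of S0 ?u) ?f"
    using decomp_of_bar[OF T, of x] decomp_of_bar[OF T, of a] xa s
    by (auto simp: Tset_def Lset_def Rset_def)
  have "x = ?e * ?u" using dx adequate_transversal_ast_of(3)[OF T u] by (simp add: decomp_def mult.assoc)
  moreover have "a = ?u * ?f" using da adequate_transversal_plus_of(3)[OF T u] by (simp add: decomp_def)
  moreover have "decomp S0 (?e * ?u * ?f) ?u ?e ?f" using dx da by (simp add: decomp_def)
  ultimately show thesis using that by blast
qed

lemma decomp_idempotent_iff:
  assumes T: "adequate_transversal S0" and d: "decomp S0 y u e f"
  shows "y * y = y \<longleftrightarrow> e * u * f * (e * u) = e * u \<and> u * f * e * (u * f) = u * f"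
proof -
  have u: "u \<in> S0" and y: "y = e * u * f" using d by (auto simp: decomp_def)
  note U = decomp_idempotent_units[OF T d]
  show ?thesis unfolding y using idempotent_sandwich_iff[OF U(2) _ U(4)]
      adequate_transversal_plus_of(3)[OF T u] adequate_transversal_ast_of(3)[OF T u] by blast
qed

lemma Tmul_idem_iff:
  assumes T: "adequate_transversal S0" and d: "decomp S0 y u e f"
  shows "Tmul S0 (e * u, u * f) (e * u, u * f) = (e * u, u * f) \<longleftrightarrow> y * y = y"
  using decomp_idempotent_iff[OF T d] Tset_pair_of_decomp(2,3)[OF T d]
  by (simp add: Tmul_def mult.assoc)

lemma ET_idempotent_decomp:
  assumes T: "adequate_transversal S0" and xa: "(x, a) \<in> ET S0"
  obtains y u e f where "decomp S0 y u e f" "y * y = y" "x = e * u" "a = u * f"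
proof -
  obtain y u e f where d: "decomp S0 y u e f" "x = e * u" "a = u * f"
    using Tset_pair_decomp[OF T] xa unfolding ET_def by blast
  then have "y * y = y" using Tmul_idem_iff[OF T d(1)] xa by (simp add: ET_def)
  then show thesis using that d by blast
qed

lemma ET_regular:
  assumes T: "adequate_transversal S0" and xa: "(x, a) \<in> ET S0"
  shows "regular x" "regular a"
proof -
  obtain y u e f where d: "decomp S0 y u e f" "y * y = y" "x = e * u" "a = u * f"
    using ET_idempotent_decomp[OF T xa] .
  then have "x * f * x = x" "a * e * a = a"
    using decomp_idempotent_iff[OF T d(1)] by simp_all
  then show "regular x" "regular a" unfolding regular_def by blast+
qed

theorem lemma2p6:
  fixes S0 :: "'a::semigroup_mult set"
  assumes "abundant (UNIV :: 'a set)"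
    and "quasi_ideal_adequate_transversal S0"
  shows "ET S0 = {(e_of S0 y * bar S0 y, bar S0 y * f_of S0 y) | y. y \<in> idems UNIV}
    \<and> (\<forall>x a. (x, a) \<in> ET S0 \<longrightarrow> regular x \<and> regular a)"
proof -
  have T: "adequate_transversal S0"
    using assms(2) unfolding quasi_ideal_adequate_transversal_def by simp
  have "(x, a) \<in> {(e_of S0 y * bar S0 y, bar S0 y * f_of S0 y) | y. y \<in> idems UNIV}"
    if xa: "(x, a) \<in> ET S0" for x a
  proof -
    obtain y u e f where d: "decomp S0 y u e f" "y * y = y" "x = e * u" "a = u * f"
      using ET_idempotent_decomp[OF T xa] .
    then show ?thesis using decomp_determines[OF T d(1)] by (auto simp: idems_def)
  qed
  moreover have "(e_of S0 y * bar S0 y, bar S0 y * f_of S0 y) \<in> ET S0" if "y \<in> idems UNIV" for y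
    using Tset_pair_of_decomp(1)[OF T decomp_of_bar[OF T]] Tmul_idem_iff[OF T decomp_of_bar[OF T]]
      that by (simp add: ET_def idems_def)
  ultimately show ?thesis using ET_regular[OF T] by auto
qed

end
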